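(* Let $R$ be a commutative filtered ring and let $(M[i],\mu_i)$ be a compact-continuous-Hausdorff ray-representation, and let $i\in\mathbb{N}$. Then: (1) if $m\in M[i+1]$, then $\widetilde{\mu}_{i+1}m$ is closed in $M[i]$, and it is a linear variety if it is non-empty; (2) if $N$ is a closed submodule of $M[i+1]$, then $\widetilde{\mu}_{i+1}N$ is a closed submodule of $M[i]$. Consequently, $\bigcap_{i\ge0}\widetilde{\mu}_{\le i}M[i]$ equals the set of $m\in M[0]$ for which there exists $(m_i)\in\prod_{i\ge0}M[i]$ with $m_0=m$ and $(m_i,m_{i-1})\in\widetilde{\mu}_i$ for all $i>0$.
   Context: $R$ is filtered by a descending chain of ideals $R_n$ ($n\ge0$) with $R_pR_q\subseteq R_{p+q}$; a filtered $R$-module $M$ has a descending chain of submodules $M_n$ with $R_pM_q\subseteq M_{p+q}$, and carries the topology where the sets $m+M_n$ form a fundamental system of neighbourhoods of $m$. A linear variety is a coset $m+N$ of a submodule; $M$ is linearly compact if every family of closed linear varieties with the finite intersection property has nonempty intersection. A ray-representation: $R$-modules $M[i]$ ($i\ge0$) and, for $i\ge1$, a sign $\sigma_i\in\{+,-\}$ and an $R$-linear map $\mu_i\colon M[i]\to M[i-1]$ if $\sigma_i=-$, $\mu_i\colon M[i-1]\to M[i]$ if $\sigma_i=+$ (the restriction of a binary-tree diagram to a ray). It is compact-continuous-Hausdorff if each $M[i]$ is filtered and linearly compact, each $\mu_i$ is continuous, and $\bigcap_nM_n[i]=0$. The relation $\widetilde{\mu}_i\subseteq M[i]\oplus M[i-1]$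 is $\{(x,\mu_i(x)):x\in M[i]\}$ if $\sigma_i=-$ and $\{(\mu_i(y),y):y\in M[i-1]\}$ if $\sigma_i=+$; for $x\in M[i]$, $\widetilde{\mu}_ix=\{y:(x,y)\in\widetilde{\mu}_i\}$ and $\widetilde{\mu}_iS=\bigcup_{x\in S}\widetilde{\mu}_ix$. For $S\subseteq M[n]$, $\widetilde{\mu}_{\le n}S$ is the set of $m_0\in M[0]$ for which there exist $m_i\in M[i]$ ($1\le i\le n$) with $m_n\in S$ and $(m_i,m_{i-1})\in\widetilde{\mu}_i$; $\widetilde{\mu}_{\le0}S=S$. *)

theory Defs
  imports "HOL-Algebra.Module" "HOL-Algebra.Ideal"
begin

definition filtered_ring :: "'r ring \<Rightarrow> (nat \<Rightarrow> 'r set) \<Rightarrow> bool" where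
  "filtered_ring R Rf \<longleftrightarrow> cring R \<and> (\<forall>n. ideal (Rf n) R) \<and> (\<forall>n. Rf (Suc n) \<subseteq> Rf n) \<and>
     (\<forall>p q. \<forall>a\<in>Rf p. \<forall>b\<in>Rf q. a \<otimes>\<^bsub>R\<^esub> b \<in> Rf (p + q))"

definition filtered_module ::
  "'r ring \<Rightarrow> (nat \<Rightarrow> 'r set) \<Rightarrow> ('r, 'm) module \<Rightarrow> (nat \<Rightarrow> 'm set) \<Rightarrow> bool" where
  "filtered_module R Rf M Mf \<longleftrightarrow> module R M \<and> (\<forall>n. submodule (Mf n) R M) \<and>
     (\<forall>n. Mf (Suc n) \<subseteq> Mf n) \<and>
     (\<forall>p q. \<forall>a\<in>Rf p. \<forall>x\<in>Mf q. a \<odot>\<^bsub>M\<^esub> x \<in> Mf (p + q))"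

definition coset_of :: "('r, 'm) module \<Rightarrow> 'm \<Rightarrow> 'm set \<Rightarrow> 'm set" where
  "coset_of M x N = (\<lambda>y. x \<oplus>\<^bsub>M\<^esub> y) ` N"

definition fm_open :: "('r, 'm) module \<Rightarrow> (nat \<Rightarrow> 'm set) \<Rightarrow> 'm set \<Rightarrow> bool" where
  "fm_open M Mf U \<longleftrightarrow> U \<subseteq> carrier M \<and> (\<forall>x\<in>U. \<exists>n. coset_of M x (Mf n) \<subseteq> U)"

definition fm_closed :: "('r, 'm) module \<Rightarrow> (nat \<Rightarrow> 'm set) \<Rightarrow> 'm set \<Rightarrow> bool" where
  "fm_closed M Mf S \<longleftrightarrow> S \<subseteq> carrier M \<and> fm_open M Mf (carrier M - S)"

definition fm_continuous ::
  "('r, 'm) module \<Rightarrow> (nat \<Rightarrow> 'm set) \<Rightarrow> ('r, 'm) module \<Rightarrow> (nat \<Rightarrow> 'm set) \<Rightarrow> ('m \<Rightarrow> 'm) \<Rightarrow> bool" where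
  "fm_continuous M Mf N Nf f \<longleftrightarrow>
     (\<forall>U. fm_open N Nf U \<longrightarrow> fm_open M Mf {x \<in> carrier M. f x \<in> U})"

definition linear_variety :: "'r ring \<Rightarrow> ('r, 'm) module \<Rightarrow> 'm set \<Rightarrow> bool" where
  "linear_variety R M S \<longleftrightarrow> (\<exists>x\<in>carrier M. \<exists>N. submodule N R M \<and> S = coset_of M x N)"

definition linearly_compact :: "'r ring \<Rightarrow> ('r, 'm) module \<Rightarrow> (nat \<Rightarrow> 'm set) \<Rightarrow> bool" where
  "linearly_compact R M Mf \<longleftrightarrow>
     (\<forall>F. (\<forall>S\<in>F. fm_closed M Mf S \<and> linear_variety R M S) \<and>
          (\<forall>G. G \<subseteq> F \<and> finite G \<and> G \<noteq> {} \<longrightarrow> \<Inter>G \<noteq> {}) \<longrightarrow> \<Inter>F \<noteq> {})"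

definition linear_map :: "'r ring \<Rightarrow> ('r, 'm) module \<Rightarrow> ('r, 'm) module \<Rightarrow> ('m \<Rightarrow> 'm) \<Rightarrow> bool" where
  "linear_map R M N f \<longleftrightarrow> f \<in> carrier M \<rightarrow> carrier N \<and>
     (\<forall>x\<in>carrier M. \<forall>y\<in>carrier M. f (x \<oplus>\<^bsub>M\<^esub> y) = f x \<oplus>\<^bsub>N\<^esub> f y) \<and>
     (\<forall>a\<in>carrier R. \<forall>x\<in>carrier M. f (a \<odot>\<^bsub>M\<^esub> x) = a \<odot>\<^bsub>N\<^esub> f x)"

(* Ray-representation: modules M i; for i \<ge> 1 a sign \<sigma> i (True = +, False = -) and a linear map
   \<mu> i : M i \<rightarrow> M (i-1) if \<sigma> i = -, \<mu> i : M (i-1) \<rightarrow> M i if \<sigma> i = +. *)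
definition ray_rep ::
  "'r ring \<Rightarrow> (nat \<Rightarrow> ('r, 'm) module) \<Rightarrow> (nat \<Rightarrow> bool) \<Rightarrow> (nat \<Rightarrow> 'm \<Rightarrow> 'm) \<Rightarrow> bool" where
  "ray_rep R M \<sigma> \<mu> \<longleftrightarrow> (\<forall>i. module R (M i)) \<and>
     (\<forall>i\<ge>1. if \<sigma> i then linear_map R (M (i - 1)) (M i) (\<mu> i)
             else linear_map R (M i) (M (i - 1)) (\<mu> i))"

definition cch_ray_rep ::
  "'r ring \<Rightarrow> (nat \<Rightarrow> 'r set) \<Rightarrow> (nat \<Rightarrow> ('r, 'm) module) \<Rightarrow> (nat \<Rightarrow> nat \<Rightarrow> 'm set) \<Rightarrow>
   (nat \<Rightarrow> bool) \<Rightarrow> (nat \<Rightarrow> 'm \<Rightarrow> 'm) \<Rightarrow> bool" where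
  "cch_ray_rep R Rf M Mf \<sigma> \<mu> \<longleftrightarrow> ray_rep R M \<sigma> \<mu> \<and>
     (\<forall>i. filtered_module R Rf (M i) (Mf i) \<and> linearly_compact R (M i) (Mf i) \<and>
          (\<Inter>n. Mf i n) = {\<zero>\<^bsub>M i\<^esub>}) \<and>
     (\<forall>i\<ge>1. if \<sigma> i then fm_continuous (M (i - 1)) (Mf (i - 1)) (M i) (Mf i) (\<mu> i)
             else fm_continuous (M i) (Mf i) (M (i - 1)) (Mf (i - 1)) (\<mu> i))"

definition mu_rel ::
  "(nat \<Rightarrow> ('r, 'm) module) \<Rightarrow> (nat \<Rightarrow> bool) \<Rightarrow> (nat \<Rightarrow> 'm \<Rightarrow> 'm) \<Rightarrow> nat \<Rightarrow> ('m \<times> 'm) set" where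
  "mu_rel M \<sigma> \<mu> i = {(x, y). x \<in> carrier (M i) \<and> y \<in> carrier (M (i - 1)) \<and>
      (if \<sigma> i then x = \<mu> i y else y = \<mu> i x)}"

definition mu_img ::
  "(nat \<Rightarrow> ('r, 'm) module) \<Rightarrow> (nat \<Rightarrow> bool) \<Rightarrow> (nat \<Rightarrow> 'm \<Rightarrow> 'm) \<Rightarrow> nat \<Rightarrow> 'm \<Rightarrow> 'm set" where
  "mu_img M \<sigma> \<mu> i x = {y. (x, y) \<in> mu_rel M \<sigma> \<mu> i}"

definition mu_img_set ::
  "(nat \<Rightarrow> ('r, 'm) module) \<Rightarrow> (nat \<Rightarrow> bool) \<Rightarrow> (nat \<Rightarrow> 'm \<Rightarrow> 'm) \<Rightarrow> nat \<Rightarrow> 'm set \<Rightarrow> 'm set" where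
  "mu_img_set M \<sigma> \<mu> i S = (\<Union>x\<in>S. mu_img M \<sigma> \<mu> i x)"

definition mu_le ::
  "(nat \<Rightarrow> ('r, 'm) module) \<Rightarrow> (nat \<Rightarrow> bool) \<Rightarrow> (nat \<Rightarrow> 'm \<Rightarrow> 'm) \<Rightarrow> nat \<Rightarrow> 'm set \<Rightarrow> 'm set" where
  "mu_le M \<sigma> \<mu> n S = {m0. \<exists>f. f 0 = m0 \<and> f n \<in> S \<and>
      (\<forall>i\<in>{1..n}. (f i, f (i - 1)) \<in> mu_rel M \<sigma> \<mu> i)}"

end

theory Submission
  imports Defs
begin

text \<open>
  For \<open>\<sigma>\<^sub>i\<^sub>+\<^sub>1 = +\<close> the sets \<open>\<mu>~\<^sub>i\<^sub>+\<^sub>1 m\<close> and \<open>\<mu>~\<^sub>i\<^sub>+\<^sub>1 N\<close> are preimages under the continuous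
  linear map \<open>\<mu>\<^sub>i\<^sub>+\<^sub>1\<close>, hence closed, and a nonempty fibre of a linear map is a coset of its
  kernel. For \<open>\<sigma>\<^sub>i\<^sub>+\<^sub>1 = -\<close>, \<open>\<mu>~\<^sub>i\<^sub>+\<^sub>1 m = {\<mu>\<^sub>i\<^sub>+\<^sub>1 m}\<close> is closed since the topology is
  Hausdorff, and \<open>\<mu>~\<^sub>i\<^sub>+\<^sub>1 N = \<mu>\<^sub>i\<^sub>+\<^sub>1 N\<close> is closed because a continuous linear map out of a
  linearly compact module sends closed submodules to closed sets: if \<open>y \<notin> f N\<close> met every
  neighbourhood \<open>y + M\<^sub>n\<close>, the nested nonempty closed linear varieties \<open>N \<inter> f\<^sup>-\<^sup>1(y + M\<^sub>n)\<close>
  would have a common point \<open>x\<close>, and then \<open>f x \<in> \<Inter>\<^sub>n (y + M\<^sub>n) = {y}\<close>.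

  Hence the images \<open>B\<^sub>j\<^sub>,\<^sub>k = \<mu>~\<^sub>j\<^sub>+\<^sub>1 \<dots> \<mu>~\<^sub>j\<^sub>+\<^sub>k M[j+k] \<subseteq> M[j]\<close> form decreasing chains of closed
  submodules, and every \<open>x \<in> \<Inter>\<^sub>k B\<^sub>j\<^sub>,\<^sub>k\<close> is related to some element of \<open>\<Inter>\<^sub>k B\<^sub>j\<^sub>+\<^sub>1\<^sub>,\<^sub>k\<close>: for
  \<open>\<sigma> = +\<close> take \<open>\<mu> x\<close>; for \<open>\<sigma> = -\<close> linear compactness yields a common point of the nested
  nonempty closed linear varieties \<open>B\<^sub>j\<^sub>+\<^sub>1\<^sub>,\<^sub>k \<inter> \<mu>\<^sup>-\<^sup>1 x\<close>. Since
  \<open>\<mu>~\<^sub>\<le>\<^sub>n M[n] = B\<^sub>0\<^sub>,\<^sub>n\<close>, dependent choice turns an element of \<open>\<Inter>\<^sub>n \<mu>~\<^sub>\<le>\<^sub>n M[n]\<close> into an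
  infinite chain.
\<close>

lemma (in abelian_group) minus_add_minus_cancel:
  "a \<in> carrier G \<Longrightarrow> b \<in> carrier G \<Longrightarrow> c \<in> carrier G \<Longrightarrow> (a \<ominus> b) \<oplus> (b \<ominus> c) = a \<ominus> c"
  by (simp add: a_minus_def a_assoc r_neg1)

lemma (in abelian_group) add_minus_cancel_left:
  "a \<in> carrier G \<Longrightarrow> b \<in> carrier G \<Longrightarrow> (a \<oplus> b) \<ominus> a = b"
  by (metis a_minus_def a_comm a_inv_closed r_neg2 a_closed)

lemma (in abelian_group) add_minus_cancel_right:
  "a \<in> carrier G \<Longrightarrow> b \<in> carrier G \<Longrightarrow> a \<oplus> (b \<ominus> a) = b"
  by (metis a_minus_def a_comm a_inv_closed r_neg2)

lemma (in abelian_group_hom) hom_a_minus: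
  "x \<in> carrier G \<Longrightarrow> y \<in> carrier G \<Longrightarrow> h (x \<ominus>\<^bsub>G\<^esub> y) = h x \<ominus>\<^bsub>H\<^esub> h y"
  by (simp add: a_minus_def)

lemma (in additive_subgroup) a_minus_closed:
  "x \<in> H \<Longrightarrow> y \<in> H \<Longrightarrow> x \<ominus>\<^bsub>G\<^esub> y \<in> H"
  by (simp add: a_minus_def)

lemma submodule_additive_subgroup: "submodule H R M \<Longrightarrow> additive_subgroup H M"
  by (simp add: additive_subgroup_def submodule_def)

lemma zero_submodule:
  assumes "module R M"
  shows "submodule {\<zero>\<^bsub>M\<^esub>} R M"
proof -
  interpret module R M by fact
  show ?thesis by (rule submoduleI) auto
qed

lemma linear_map_funcset: "linear_map R M N f \<Longrightarrow> f \<in> carrier M \<rightarrow> carrier N"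
  unfolding linear_map_def by blast

lemma linear_map_smult:
  "linear_map R M N f \<Longrightarrow> a \<in> carrier R \<Longrightarrow> x \<in> carrier M \<Longrightarrow> f (a \<odot>\<^bsub>M\<^esub> x) = a \<odot>\<^bsub>N\<^esub> f x"
  unfolding linear_map_def by blast

lemma linear_map_abelian_group_hom:
  assumes "module R M" "module R N" "linear_map R M N f"
  shows "abelian_group_hom M N f"
proof -
  interpret M: module R M by fact
  interpret N: module R N by fact
  show ?thesis
    using assms(3) unfolding linear_map_def
    by (intro abelian_group_homI group_hom.intro group_hom_axioms.intro M.abelian_group_axioms
        N.abelian_group_axioms M.a_group N.a_group) (auto simp: hom_def)
qed

lemma submodule_image:
  assumes M: "module R M" and N: "module R N" and f: "linear_map R M N f" and H: "submodule H R M"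
  shows "submodule (f ` H) R N"
proof -
  interpret M: module R M by fact
  interpret N: module R N by fact
  interpret f: abelian_group_hom M N f by (rule linear_map_abelian_group_hom[OF M N f])
  interpret H: additive_subgroup H M by (rule submodule_additive_subgroup[OF H])
  have smult: "f (a \<odot>\<^bsub>M\<^esub> x) = a \<odot>\<^bsub>N\<^esub> f x" if "a \<in> carrier R" "x \<in> H" for a x
    using linear_map_smult[OF f] that H.a_subset by blast
  show ?thesis
  proof (rule N.submoduleI)
    show "f ` H \<subseteq> carrier N" using H.a_subset by auto
    show "\<zero>\<^bsub>N\<^esub> \<in> f ` H" using H.zero_closed f.hom_zero by (metis image_eqI)
  next
    fix a assume "a \<in> f ` H"
    then obtain x where "x \<in> H" "a = f x" by blast
    then have "\<ominus>\<^bsub>N\<^esub> a = f (\<ominus>\<^bsub>M\<^esub> x)" using H.a_subset by auto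
    then show "\<ominus>\<^bsub>N\<^esub> a \<in> f ` H" using \<open>x \<in> H\<close> by (metis H.a_inv_closed image_eqI)
  next
    fix a b assume "a \<in> f ` H" "b \<in> f ` H"
    then obtain x y where "x \<in> H" "y \<in> H" "a = f x" "b = f y" by blast
    then have "a \<oplus>\<^bsub>N\<^esub> b = f (x \<oplus>\<^bsub>M\<^esub> y)" using H.a_subset by auto
    then show "a \<oplus>\<^bsub>N\<^esub> b \<in> f ` H" using \<open>x \<in> H\<close> \<open>y \<in> H\<close> by (metis H.a_closed image_eqI)
  next
    fix a b assume "a \<in> carrier R" "b \<in> f ` H"
    then obtain x where "x \<in> H" "b = f x" by blast
    then have "a \<odot>\<^bsub>N\<^esub> b = f (a \<odot>\<^bsub>M\<^esub> x)" using smult \<open>a \<in> carrier R\<close> by simp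
    then show "a \<odot>\<^bsub>N\<^esub> b \<in> f ` H"
      using M.submoduleE(4)[OF H] \<open>a \<in> carrier R\<close> \<open>x \<in> H\<close> by (metis image_eqI)
  qed
qed

lemma submodule_vimage:
  assumes M: "module R M" and N: "module R N" and f: "linear_map R M N f"
    and B: "submodule B R M" and P: "submodule P R N"
  shows "submodule {x \<in> B. f x \<in> P} R M"
proof -
  interpret M: module R M by fact
  interpret N: module R N by fact
  interpret f: abelian_group_hom M N f by (rule linear_map_abelian_group_hom[OF M N f])
  interpret B: additive_subgroup B M by (rule submodule_additive_subgroup[OF B])
  interpret P: additive_subgroup P N by (rule submodule_additive_subgroup[OF P])
  have smult: "f (a \<odot>\<^bsub>M\<^esub> x) = a \<odot>\<^bsub>N\<^esub> f x" if "a \<in> carrier R" "x \<in> B" for a x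
    using linear_map_smult[OF f] that B.a_subset by blast
  show ?thesis
    by (rule M.submoduleI)
      (use B.a_subset M.submoduleE(4)[OF B] N.submoduleE(4)[OF P] smult in \<open>auto simp: subset_iff\<close>)
qed

lemma coset_of_iff:
  assumes M: "module R M" and P: "submodule P R M" and x: "x \<in> carrier M"
  shows "z \<in> coset_of M x P \<longleftrightarrow> z \<in> carrier M \<and> z \<ominus>\<^bsub>M\<^esub> x \<in> P"
proof -
  interpret M: module R M by fact
  interpret P: additive_subgroup P M by (rule submodule_additive_subgroup[OF P])
  show ?thesis
  proof
    assume "z \<in> coset_of M x P"
    then obtain p where "p \<in> P" "z = x \<oplus>\<^bsub>M\<^esub> p" unfolding coset_of_def by blast
    then show "z \<in> carrier M \<and> z \<ominus>\<^bsub>M\<^esub> x \<in> P" using x by (simp add: M.add_minus_cancel_left)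
  next
    assume z: "z \<in> carrier M \<and> z \<ominus>\<^bsub>M\<^esub> x \<in> P"
    then have "z = x \<oplus>\<^bsub>M\<^esub> (z \<ominus>\<^bsub>M\<^esub> x)" using x by (simp add: M.add_minus_cancel_right)
    then show "z \<in> coset_of M x P" unfolding coset_of_def using z by blast
  qed
qed

lemma coset_of_subset_carrier:
  "module R M \<Longrightarrow> submodule P R M \<Longrightarrow> x \<in> carrier M \<Longrightarrow> coset_of M x P \<subseteq> carrier M"
  by (auto simp: coset_of_iff)

lemma coset_of_self:
  assumes M: "module R M" and P: "submodule P R M" and x: "x \<in> carrier M"
  shows "x \<in> coset_of M x P"
proof -
  interpret M: module R M by fact
  have "x \<ominus>\<^bsub>M\<^esub> x = \<zero>\<^bsub>M\<^esub>" using x by (simp add: M.r_neg a_minus_def)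
  then show ?thesis
    using x additive_subgroup.zero_closed[OF submodule_additive_subgroup[OF P]]
    by (simp add: coset_of_iff[OF M P x])
qed

lemma coset_of_zero:
  assumes M: "module R M" and x: "x \<in> carrier M"
  shows "coset_of M x {\<zero>\<^bsub>M\<^esub>} = {x}"
proof -
  interpret M: module R M by fact
  show ?thesis using x by (simp add: coset_of_def)
qed

lemma coset_of_eq:
  assumes M: "module R M" and P: "submodule P R M" and c: "c \<in> carrier M"
    and a: "a \<in> coset_of M c P"
  shows "coset_of M a P = coset_of M c P"
proof -
  interpret M: module R M by fact
  interpret P: additive_subgroup P M by (rule submodule_additive_subgroup[OF P])
  have ac: "a \<in> carrier M" and d: "a \<ominus>\<^bsub>M\<^esub> c \<in> P" using a coset_of_iff[OF M P c] by blast+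
  have "b \<ominus>\<^bsub>M\<^esub> a \<in> P \<longleftrightarrow> b \<ominus>\<^bsub>M\<^esub> c \<in> P" if b: "b \<in> carrier M" for b
  proof
    assume "b \<ominus>\<^bsub>M\<^esub> a \<in> P"
    then have "(b \<ominus>\<^bsub>M\<^esub> a) \<oplus>\<^bsub>M\<^esub> (a \<ominus>\<^bsub>M\<^esub> c) \<in> P" using d by simp
    then show "b \<ominus>\<^bsub>M\<^esub> c \<in> P" by (simp add: M.minus_add_minus_cancel b ac c)
  next
    assume "b \<ominus>\<^bsub>M\<^esub> c \<in> P"
    moreover have "c \<ominus>\<^bsub>M\<^esub> a = \<ominus>\<^bsub>M\<^esub> (a \<ominus>\<^bsub>M\<^esub> c)"
      using ac c by (simp add: a_minus_def M.minus_add M.a_comm)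
    ultimately have "(b \<ominus>\<^bsub>M\<^esub> c) \<oplus>\<^bsub>M\<^esub> (c \<ominus>\<^bsub>M\<^esub> a) \<in> P" using d by simp
    then show "b \<ominus>\<^bsub>M\<^esub> a \<in> P" by (simp add: M.minus_add_minus_cancel b ac c)
  qed
  then show ?thesis using coset_of_iff[OF M P ac] coset_of_iff[OF M P c] by blast
qed

lemma coset_of_mono: "P \<subseteq> Q \<Longrightarrow> coset_of M c P \<subseteq> coset_of M c Q"
  unfolding coset_of_def by (rule image_mono)

lemma vimage_coset_of:
  assumes M: "module R M" and N: "module R N" and f: "linear_map R M N f"
    and B: "submodule B R M" and P: "submodule P R N" and c: "c \<in> carrier N"
    and x0: "x0 \<in> B" "f x0 \<in> coset_of N c P"
  shows "{z \<in> B. f z \<in> coset_of N c P} = coset_of M x0 {z \<in> B. f z \<in> P}"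
proof -
  interpret M: module R M by fact
  interpret N: module R N by fact
  interpret f: abelian_group_hom M N f by (rule linear_map_abelian_group_hom[OF M N f])
  interpret B: additive_subgroup B M by (rule submodule_additive_subgroup[OF B])
  have x0c: "x0 \<in> carrier M" using x0 B.a_subset by blast
  have target: "f z \<in> coset_of N c P \<longleftrightarrow> f z \<ominus>\<^bsub>N\<^esub> f x0 \<in> P" if "z \<in> carrier M" for z
    using coset_of_eq[OF N P c x0(2)] coset_of_iff[OF N P f.hom_closed[OF x0c]] that by auto
  have source: "z \<in> B \<longleftrightarrow> z \<ominus>\<^bsub>M\<^esub> x0 \<in> B" if z: "z \<in> carrier M" for z
  proof
    assume "z \<ominus>\<^bsub>M\<^esub> x0 \<in> B"
    then have "x0 \<oplus>\<^bsub>M\<^esub> (z \<ominus>\<^bsub>M\<^esub> x0) \<in> B" using x0(1) by simp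
    then show "z \<in> B" using M.add_minus_cancel_right[OF x0c z] by simp
  qed (use x0(1) B.a_minus_closed in blast)
  show ?thesis
    using coset_of_iff[OF M submodule_vimage[OF M N f B P] x0c] target source
      f.hom_a_minus[OF _ x0c] B.a_subset by auto
qed

lemma linear_variety_vimage_coset_of:
  assumes M: "module R M" and N: "module R N" and f: "linear_map R M N f"
    and B: "submodule B R M" and P: "submodule P R N" and c: "c \<in> carrier N"
    and ne: "{z \<in> B. f z \<in> coset_of N c P} \<noteq> {}"
  shows "linear_variety R M {z \<in> B. f z \<in> coset_of N c P}"
proof -
  obtain x0 where x0: "x0 \<in> B" "f x0 \<in> coset_of N c P" using ne by blast
  then have "x0 \<in> carrier M" using module.submoduleE(1)[OF M B] by blast
  then show ?thesis
    unfolding linear_variety_def vimage_coset_of[OF M N f B P c x0]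
    using submodule_vimage[OF M N f B P] by blast
qed

lemma linear_variety_singleton: "module R M \<Longrightarrow> x \<in> carrier M \<Longrightarrow> linear_variety R M {x}"
  unfolding linear_variety_def by (metis coset_of_zero zero_submodule)

section \<open>The filtration topology\<close>

lemma filtered_moduleD:
  assumes "filtered_module R Rf M Mf"
  shows "module R M" and "submodule (Mf n) R M" and "Mf (Suc n) \<subseteq> Mf n"
  using assms unfolding filtered_module_def by blast+

lemma fm_closed_carrier: "fm_closed M Mf (carrier M)"
  unfolding fm_closed_def fm_open_def by simp

lemma fm_closed_Int:
  assumes S: "fm_closed M Mf S" and T: "fm_closed M Mf T"
  shows "fm_closed M Mf (S \<inter> T)"
proof -
  have "\<exists>n. coset_of M x (Mf n) \<subseteq> carrier M - S \<inter> T" if x: "x \<in> carrier M - S \<inter> T" for x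
  proof (cases "x \<in> S")
    case True
    with x obtain n where "coset_of M x (Mf n) \<subseteq> carrier M - T"
      using T unfolding fm_closed_def fm_open_def by blast
    then show ?thesis by blast
  next
    case False
    with x obtain n where "coset_of M x (Mf n) \<subseteq> carrier M - S"
      using S unfolding fm_closed_def fm_open_def by blast
    then show ?thesis by blast
  qed
  then show ?thesis using S unfolding fm_closed_def fm_open_def by blast
qed

lemma fm_closed_INT:
  assumes S: "\<And>i. fm_closed M Mf (S i)"
  shows "fm_closed M Mf (\<Inter>i. S i)"
proof -
  have "\<exists>n. coset_of M x (Mf n) \<subseteq> carrier M - (\<Inter>i. S i)" if x: "x \<in> carrier M - (\<Inter>i. S i)" for x
  proof -
    obtain i where "x \<in> carrier M - S i" using x by blast
    then obtain n where "coset_of M x (Mf n) \<subseteq> carrier M - S i"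
      using S[of i] unfolding fm_closed_def fm_open_def by blast
    then show ?thesis by blast
  qed
  moreover have "(\<Inter>i. S i) \<subseteq> carrier M" using S[of undefined] unfolding fm_closed_def by blast
  ultimately show ?thesis unfolding fm_closed_def fm_open_def by blast
qed

lemma fm_closed_vimage:
  assumes f: "f \<in> carrier M \<rightarrow> carrier N" and cont: "fm_continuous M Mf N Nf f"
    and S: "fm_closed N Nf S"
  shows "fm_closed M Mf {x \<in> carrier M. f x \<in> S}"
proof -
  have "fm_open N Nf (carrier N - S)" using S unfolding fm_closed_def by blast
  then have "fm_open M Mf {x \<in> carrier M. f x \<in> carrier N - S}"
    using cont unfolding fm_continuous_def by blast
  moreover have "{x \<in> carrier M. f x \<in> carrier N - S} = carrier M - {x \<in> carrier M. f x \<in> S}"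
    using f by blast
  ultimately show ?thesis unfolding fm_closed_def by simp
qed

lemma fm_closed_coset_of:
  assumes fm: "filtered_module R Rf M Mf" and x: "x \<in> carrier M"
  shows "fm_closed M Mf (coset_of M x (Mf n))"
proof -
  note M = filtered_moduleD(1)[OF fm] and P = filtered_moduleD(2)[OF fm, of n]
  have "coset_of M z (Mf n) \<subseteq> carrier M - coset_of M x (Mf n)"
    if z: "z \<in> carrier M" "z \<notin> coset_of M x (Mf n)" for z
  proof
    fix w assume w: "w \<in> coset_of M z (Mf n)"
    have "w \<notin> coset_of M x (Mf n)"
    proof
      assume "w \<in> coset_of M x (Mf n)"
      then have "coset_of M w (Mf n) = coset_of M x (Mf n)" by (rule coset_of_eq[OF M P x])
      moreover have "coset_of M w (Mf n) = coset_of M z (Mf n)" by (rule coset_of_eq[OF M P z(1) w])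
      ultimately show False using coset_of_self[OF M P z(1)] z(2) by simp
    qed
    moreover have "w \<in> carrier M" using w coset_of_subset_carrier[OF M P z(1)] by blast
    ultimately show "w \<in> carrier M - coset_of M x (Mf n)" by blast
  qed
  then show ?thesis
    using coset_of_subset_carrier[OF M P x] unfolding fm_closed_def fm_open_def by blast
qed

lemma INT_coset_of_eq_singleton:
  assumes fm: "filtered_module R Rf M Mf" and sep: "(\<Inter>n. Mf n) = {\<zero>\<^bsub>M\<^esub>}" and x: "x \<in> carrier M"
  shows "(\<Inter>n. coset_of M x (Mf n)) = {x}"
proof (intro equalityI subsetI)
  note M = filtered_moduleD(1)[OF fm] and P = filtered_moduleD(2)[OF fm]
  interpret M: module R M by fact
  fix z assume "z \<in> (\<Inter>n. coset_of M x (Mf n))"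
  then have z: "z \<in> carrier M" and "\<And>n. z \<ominus>\<^bsub>M\<^esub> x \<in> Mf n" using coset_of_iff[OF M P x] by blast+
  then have "z \<ominus>\<^bsub>M\<^esub> x = \<zero>\<^bsub>M\<^esub>" using sep by blast
  then show "z \<in> {x}" using M.add_minus_cancel_right[OF x z] x by simp
next
  fix z assume "z \<in> {x}"
  then show "z \<in> (\<Inter>n. coset_of M x (Mf n))"
    using coset_of_self[OF filtered_moduleD(1,2)[OF fm] x] by blast
qed

lemma fm_closed_singleton:
  assumes "filtered_module R Rf M Mf" "(\<Inter>n. Mf n) = {\<zero>\<^bsub>M\<^esub>}" "x \<in> carrier M"
  shows "fm_closed M Mf {x}"
  using fm_closed_INT[of M Mf "\<lambda>n. coset_of M x (Mf n)"] fm_closed_coset_of[OF assms(1,3)]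
    INT_coset_of_eq_singleton[OF assms] by simp

section \<open>Linear compactness\<close>

lemma linearly_compact_decseq:
  assumes lc: "linearly_compact R M Mf"
    and closed: "\<And>k. fm_closed M Mf (S k)" and variety: "\<And>k. linear_variety R M (S k)"
    and ne: "\<And>k. S k \<noteq> {}" and dec: "\<And>k. S (Suc k) \<subseteq> S k"
  shows "(\<Inter>k. S k) \<noteq> {}"
proof -
  have "\<Inter>G \<noteq> {}" if G: "G \<subseteq> range S" "finite G" "G \<noteq> {}" for G
  proof -
    obtain I where I: "finite I" "G = S ` I" using finite_subset_image[OF G(2,1)] by blast
    have "S (Max I) \<subseteq> S i" if "i \<in> I" for i
      using lift_Suc_antimono_le[of S, OF dec] Max_ge[OF I(1) that] .
    then have "S (Max I) \<subseteq> \<Inter>G" using I(2) by blast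
    then show ?thesis using ne by blast
  qed
  moreover have "\<forall>T\<in>range S. fm_closed M Mf T \<and> linear_variety R M T" using closed variety by blast
  ultimately have "\<Inter>(range S) \<noteq> {}"
    using lc unfolding linearly_compact_def by (elim allE[of _ "range S"]) blast
  then show ?thesis by simp
qed

lemma linearly_compact_common_vimage:
  assumes M: "module R M" and lc: "linearly_compact R M Mf"
    and N: "module R N" and f: "linear_map R M N f" and cont: "fm_continuous M Mf N Nf f"
    and B: "\<And>k. submodule (B k) R M" "\<And>k. fm_closed M Mf (B k)" "\<And>k. B (Suc k) \<subseteq> B k"
    and P: "\<And>k. submodule (P k) R N" "\<And>k. fm_closed N Nf (coset_of N c (P k))"
      "\<And>k. P (Suc k) \<subseteq> P k"
    and c: "c \<in> carrier N"
    and hit: "\<And>k. \<exists>y\<in>B k. f y \<in> coset_of N c (P k)"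
  shows "\<exists>y. \<forall>k. y \<in> B k \<and> f y \<in> coset_of N c (P k)"
proof -
  define S where "S k = {y \<in> B k. f y \<in> coset_of N c (P k)}" for k
  have "S k = B k \<inter> {x \<in> carrier M. f x \<in> coset_of N c (P k)}" for k
    unfolding S_def using module.submoduleE(1)[OF M B(1)] by blast
  then have closed: "fm_closed M Mf (S k)" for k
    using fm_closed_Int[OF B(2) fm_closed_vimage[OF linear_map_funcset[OF f] cont P(2)]] by simp
  have ne: "S k \<noteq> {}" for k
    unfolding S_def using hit by blast
  have variety: "linear_variety R M (S k)" for k
    using linear_variety_vimage_coset_of[OF M N f B(1) P(1) c] ne unfolding S_def by blast
  have dec: "S (Suc k) \<subseteq> S k" for k
    unfolding S_def using B(3)[of k] coset_of_mono[OF P(3)[of k]] by blast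
  obtain y where "\<forall>k. y \<in> S k"
    using linearly_compact_decseq[where S=S, OF lc closed variety ne dec] by blast
  then show ?thesis unfolding S_def by blast
qed

lemma fm_closed_image:
  assumes M: "module R M" and lc: "linearly_compact R M Mf"
    and fmN: "filtered_module R Rf N Nf" and sep: "(\<Inter>n. Nf n) = {\<zero>\<^bsub>N\<^esub>}"
    and f: "linear_map R M N f" and cont: "fm_continuous M Mf N Nf f"
    and S: "submodule S R M" "fm_closed M Mf S"
  shows "fm_closed N Nf (f ` S)"
proof -
  note N = filtered_moduleD(1)[OF fmN]
  have "\<exists>n. coset_of N y (Nf n) \<subseteq> carrier N - f ` S" if y: "y \<in> carrier N" "y \<notin> f ` S" for y
  proof (rule ccontr)
    assume far: "\<nexists>n. coset_of N y (Nf n) \<subseteq> carrier N - f ` S"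
    have "\<exists>x\<in>S. f x \<in> coset_of N y (Nf n)" for n
    proof -
      have "\<not> coset_of N y (Nf n) \<subseteq> carrier N - f ` S" using far by blast
      then show ?thesis
        using coset_of_subset_carrier[OF N filtered_moduleD(2)[OF fmN] y(1)] by blast
    qed
    then obtain x where "x \<in> S" "\<forall>n. f x \<in> coset_of N y (Nf n)"
      using linearly_compact_common_vimage[where B="\<lambda>_. S" and P=Nf, OF M lc N f cont S(1) S(2)
          subset_refl filtered_moduleD(2)[OF fmN] fm_closed_coset_of[OF fmN y(1)]
          filtered_moduleD(3)[OF fmN] y(1)]
      by blast
    then have "f x \<in> (\<Inter>n. coset_of N y (Nf n))" by blast
    then have "f x = y" using INT_coset_of_eq_singleton[OF fmN sep y(1)] by simp
    then show False using \<open>x \<in> S\<close> y(2) by blast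
  qed
  moreover have "f ` S \<subseteq> carrier N"
    using linear_map_funcset[OF f] module.submoduleE(1)[OF M S(1)] by blast
  ultimately show ?thesis unfolding fm_closed_def fm_open_def by blast
qed

lemma linearly_compact_INT_image:
  assumes M: "module R M" and lc: "linearly_compact R M Mf"
    and fmN: "filtered_module R Rf N Nf" and sep: "(\<Inter>n. Nf n) = {\<zero>\<^bsub>N\<^esub>}"
    and f: "linear_map R M N f" and cont: "fm_continuous M Mf N Nf f"
    and B: "\<And>k. submodule (B k) R M" "\<And>k. fm_closed M Mf (B k)" "\<And>k. B (Suc k) \<subseteq> B k"
  shows "(\<Inter>k. f ` B k) \<subseteq> f ` (\<Inter>k. B k)"
proof
  fix x assume x: "x \<in> (\<Inter>k. f ` B k)"
  note N = filtered_moduleD(1)[OF fmN]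
  have xc: "x \<in> carrier N"
    using x linear_map_funcset[OF f] module.submoduleE(1)[OF M B(1)] by blast
  have "\<exists>y. \<forall>k. y \<in> B k \<and> f y \<in> coset_of N x {\<zero>\<^bsub>N\<^esub>}"
  proof (rule linearly_compact_common_vimage[where B=B and P="\<lambda>_. {\<zero>\<^bsub>N\<^esub>}",
        OF M lc N f cont B zero_submodule[OF N] _ subset_refl xc])
    show "fm_closed N Nf (coset_of N x {\<zero>\<^bsub>N\<^esub>})"
      using fm_closed_singleton[OF fmN sep xc] by (simp add: coset_of_zero[OF N xc])
    show "\<exists>y\<in>B k. f y \<in> coset_of N x {\<zero>\<^bsub>N\<^esub>}" for k
      using x by (auto simp: coset_of_zero[OF N xc])
  qed
  then show "x \<in> f ` (\<Inter>k. B k)" by (auto simp: coset_of_zero[OF N xc])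
qed

section \<open>Ray representations\<close>

lemma cch_ray_repD:
  assumes "cch_ray_rep R Rf M Mf \<sigma> \<mu>"
  shows "filtered_module R Rf (M i) (Mf i)" and "linearly_compact R (M i) (Mf i)"
    and "(\<Inter>n. Mf i n) = {\<zero>\<^bsub>M i\<^esub>}"
  using assms unfolding cch_ray_rep_def by blast+

lemma cch_ray_rep_SucD:
  assumes "cch_ray_rep R Rf M Mf \<sigma> \<mu>"
  shows "if \<sigma> (Suc i)
    then linear_map R (M i) (M (Suc i)) (\<mu> (Suc i)) \<and>
      fm_continuous (M i) (Mf i) (M (Suc i)) (Mf (Suc i)) (\<mu> (Suc i))
    else linear_map R (M (Suc i)) (M i) (\<mu> (Suc i)) \<and>
      fm_continuous (M (Suc i)) (Mf (Suc i)) (M i) (Mf i) (\<mu> (Suc i))"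
proof -
  have "\<forall>j\<ge>1. if \<sigma> j then linear_map R (M (j - 1)) (M j) (\<mu> j)
      else linear_map R (M j) (M (j - 1)) (\<mu> j)"
    and "\<forall>j\<ge>1. if \<sigma> j then fm_continuous (M (j - 1)) (Mf (j - 1)) (M j) (Mf j) (\<mu> j)
      else fm_continuous (M j) (Mf j) (M (j - 1)) (Mf (j - 1)) (\<mu> j)"
    using assms unfolding cch_ray_rep_def ray_rep_def by blast+
  then show ?thesis by (auto dest!: spec[of _ "Suc i"])
qed

lemma mu_rel_Suc:
  "(x, y) \<in> mu_rel M \<sigma> \<mu> (Suc i) \<longleftrightarrow> x \<in> carrier (M (Suc i)) \<and> y \<in> carrier (M i) \<and>
    (if \<sigma> (Suc i) then x = \<mu> (Suc i) y else y = \<mu> (Suc i) x)"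
  unfolding mu_rel_def by simp

lemma mu_img_closed_linear_variety:
  assumes c: "cch_ray_rep R Rf M Mf \<sigma> \<mu>" and m: "m \<in> carrier (M (Suc i))"
  shows "fm_closed (M i) (Mf i) (mu_img M \<sigma> \<mu> (Suc i) m) \<and>
    (mu_img M \<sigma> \<mu> (Suc i) m \<noteq> {} \<longrightarrow> linear_variety R (M i) (mu_img M \<sigma> \<mu> (Suc i) m))"
proof -
  note fmi = cch_ray_repD(1)[OF c, of i] and fms = cch_ray_repD(1)[OF c, of "Suc i"]
  note Mi = filtered_moduleD(1)[OF fmi] and Ms = filtered_moduleD(1)[OF fms]
  show ?thesis
  proof (cases "\<sigma> (Suc i)")
    case True
    then have f: "linear_map R (M i) (M (Suc i)) (\<mu> (Suc i))"
      and cont: "fm_continuous (M i) (Mf i) (M (Suc i)) (Mf (Suc i)) (\<mu> (Suc i))"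
      using cch_ray_rep_SucD[OF c, of i] by simp_all
    have "mu_img M \<sigma> \<mu> (Suc i) m = {y \<in> carrier (M i). \<mu> (Suc i) y \<in> {m}}"
      using True m unfolding mu_img_def mu_rel_Suc by auto
    then show ?thesis
      using fm_closed_vimage[OF linear_map_funcset[OF f] cont
          fm_closed_singleton[OF fms cch_ray_repD(3)[OF c] m]]
        linear_variety_vimage_coset_of[OF Mi Ms f module.carrier_is_submodule[OF Mi]
          zero_submodule[OF Ms] m]
      by (simp add: coset_of_zero[OF Ms m])
  next
    case False
    then have "linear_map R (M (Suc i)) (M i) (\<mu> (Suc i))"
      using cch_ray_rep_SucD[OF c, of i] by simp
    then have \<mu>m: "\<mu> (Suc i) m \<in> carrier (M i)" using linear_map_funcset m by blast
    moreover have "mu_img M \<sigma> \<mu> (Suc i) m = {\<mu> (Suc i) m}"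
      using False m \<mu>m unfolding mu_img_def mu_rel_Suc by auto
    ultimately show ?thesis
      using fm_closed_singleton[OF fmi cch_ray_repD(3)[OF c]] linear_variety_singleton[OF Mi]
      by simp
  qed
qed

lemma mu_img_set_closed_submodule:
  assumes c: "cch_ray_rep R Rf M Mf \<sigma> \<mu>"
    and N: "submodule N R (M (Suc i))" "fm_closed (M (Suc i)) (Mf (Suc i)) N"
  shows "submodule (mu_img_set M \<sigma> \<mu> (Suc i) N) R (M i) \<and>
    fm_closed (M i) (Mf i) (mu_img_set M \<sigma> \<mu> (Suc i) N)"
proof -
  note fmi = cch_ray_repD(1)[OF c, of i] and fms = cch_ray_repD(1)[OF c, of "Suc i"]
  note Mi = filtered_moduleD(1)[OF fmi] and Ms = filtered_moduleD(1)[OF fms]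
  have N_carrier: "N \<subseteq> carrier (M (Suc i))" by (rule module.submoduleE(1)[OF Ms N(1)])
  show ?thesis
  proof (cases "\<sigma> (Suc i)")
    case True
    then have f: "linear_map R (M i) (M (Suc i)) (\<mu> (Suc i))"
      and cont: "fm_continuous (M i) (Mf i) (M (Suc i)) (Mf (Suc i)) (\<mu> (Suc i))"
      using cch_ray_rep_SucD[OF c, of i] by simp_all
    have "mu_img_set M \<sigma> \<mu> (Suc i) N = {y \<in> carrier (M i). \<mu> (Suc i) y \<in> N}"
      using True N_carrier unfolding mu_img_set_def mu_img_def mu_rel_Suc by auto
    then show ?thesis
      using submodule_vimage[OF Mi Ms f module.carrier_is_submodule[OF Mi] N(1)]
        fm_closed_vimage[OF linear_map_funcset[OF f] cont N(2)] by simp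
  next
    case False
    then have f: "linear_map R (M (Suc i)) (M i) (\<mu> (Suc i))"
      and cont: "fm_continuous (M (Suc i)) (Mf (Suc i)) (M i) (Mf i) (\<mu> (Suc i))"
      using cch_ray_rep_SucD[OF c, of i] by simp_all
    have "mu_img_set M \<sigma> \<mu> (Suc i) N = \<mu> (Suc i) ` N"
      using False N_carrier linear_map_funcset[OF f]
      unfolding mu_img_set_def mu_img_def mu_rel_Suc by auto
    then show ?thesis
      using submodule_image[OF Ms Mi f N(1)]
        fm_closed_image[OF Ms cch_ray_repD(2)[OF c] fmi cch_ray_repD(3)[OF c] f cont N] by simp
  qed
qed

text \<open>\<open>mu_reach M \<sigma> \<mu> j k\<close> is \<open>\<mu>~\<^sub>j\<^sub>+\<^sub>1 (\<dots> (\<mu>~\<^sub>j\<^sub>+\<^sub>k M[j+k]))\<close>, so that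
  \<open>\<mu>~\<^sub>\<le>\<^sub>n M[n] = mu_reach M \<sigma> \<mu> 0 n\<close>.\<close>

fun mu_reach :: "(nat \<Rightarrow> ('r, 'm) module) \<Rightarrow> (nat \<Rightarrow> bool) \<Rightarrow> (nat \<Rightarrow> 'm \<Rightarrow> 'm) \<Rightarrow> nat \<Rightarrow> nat \<Rightarrow> 'm set"
  where
    "mu_reach M \<sigma> \<mu> j 0 = carrier (M j)"
  | "mu_reach M \<sigma> \<mu> j (Suc k) = mu_img_set M \<sigma> \<mu> (Suc j) (mu_reach M \<sigma> \<mu> (Suc j) k)"

lemma mu_reach_closed_submodule:
  assumes c: "cch_ray_rep R Rf M Mf \<sigma> \<mu>"
  shows "submodule (mu_reach M \<sigma> \<mu> j k) R (M j) \<and> fm_closed (M j) (Mf j) (mu_reach M \<sigma> \<mu> j k)"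
proof (induction k arbitrary: j)
  case 0
  show ?case
    using module.carrier_is_submodule[OF filtered_moduleD(1)[OF cch_ray_repD(1)[OF c]]]
      fm_closed_carrier by simp
next
  case (Suc k)
  then show ?case using mu_img_set_closed_submodule[OF c] by simp
qed

lemma mu_img_set_subset_carrier: "mu_img_set M \<sigma> \<mu> (Suc j) S \<subseteq> carrier (M j)"
  unfolding mu_img_set_def mu_img_def mu_rel_Suc by blast

lemma mu_img_set_mono: "S \<subseteq> T \<Longrightarrow> mu_img_set M \<sigma> \<mu> i S \<subseteq> mu_img_set M \<sigma> \<mu> i T"
  unfolding mu_img_set_def by blast

lemma mu_reach_Suc_subset: "mu_reach M \<sigma> \<mu> j (Suc k) \<subseteq> mu_reach M \<sigma> \<mu> j k"
proof (induction k arbitrary: j)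
  case 0
  show ?case using mu_img_set_subset_carrier by simp
next
  case (Suc k)
  show ?case using mu_img_set_mono[OF Suc.IH[of "Suc j"]] by simp
qed

lemma mu_le_subset_mu_reach: "mu_le M \<sigma> \<mu> n (carrier (M n)) \<subseteq> mu_reach M \<sigma> \<mu> 0 n"
proof
  fix m assume "m \<in> mu_le M \<sigma> \<mu> n (carrier (M n))"
  then obtain f where f: "f 0 = m" "f n \<in> carrier (M n)"
    "\<forall>i\<in>{1..n}. (f i, f (i - 1)) \<in> mu_rel M \<sigma> \<mu> i"
    unfolding mu_le_def by blast
  have "f j \<in> mu_reach M \<sigma> \<mu> j d" if "j + d = n" for j d
    using that
  proof (induction d arbitrary: j)
    case 0
    then show ?case using f(2) by simp
  next
    case (Suc d)
    then have "f (Suc j) \<in> mu_reach M \<sigma> \<mu> (Suc j) d" by simp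
    moreover have "(f (Suc j), f j) \<in> mu_rel M \<sigma> \<mu> (Suc j)"
      using f(3)[rule_format, of "Suc j"] Suc.prems by simp
    ultimately show ?case unfolding mu_reach.simps mu_img_set_def mu_img_def by blast
  qed
  from this[of 0 n] show "m \<in> mu_reach M \<sigma> \<mu> 0 n" using f(1) by simp
qed

lemma mu_reach_lift:
  assumes c: "cch_ray_rep R Rf M Mf \<sigma> \<mu>" and x: "\<forall>k. x \<in> mu_reach M \<sigma> \<mu> j k"
  shows "\<exists>y. (\<forall>k. y \<in> mu_reach M \<sigma> \<mu> (Suc j) k) \<and> (y, x) \<in> mu_rel M \<sigma> \<mu> (Suc j)"
proof -
  have xc: "x \<in> carrier (M j)" using x[rule_format, of 0] by simp
  have hit: "\<exists>y\<in>mu_reach M \<sigma> \<mu> (Suc j) k. (y, x) \<in> mu_rel M \<sigma> \<mu> (Suc j)" for k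
    using x[rule_format, of "Suc k"] unfolding mu_reach.simps mu_img_set_def mu_img_def by blast
  show ?thesis
  proof (cases "\<sigma> (Suc j)")
    case True
    then have f: "linear_map R (M j) (M (Suc j)) (\<mu> (Suc j))"
      using cch_ray_rep_SucD[OF c, of j] by simp
    have "\<mu> (Suc j) x \<in> mu_reach M \<sigma> \<mu> (Suc j) k" for k
      using hit[of k] True unfolding mu_rel_Suc by auto
    moreover have "(\<mu> (Suc j) x, x) \<in> mu_rel M \<sigma> \<mu> (Suc j)"
      using True xc linear_map_funcset[OF f] unfolding mu_rel_Suc by auto
    ultimately show ?thesis by blast
  next
    case False
    then have f: "linear_map R (M (Suc j)) (M j) (\<mu> (Suc j))"
      and cont: "fm_continuous (M (Suc j)) (Mf (Suc j)) (M j) (Mf j) (\<mu> (Suc j))"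
      using cch_ray_rep_SucD[OF c, of j] by simp_all
    have "x \<in> (\<Inter>k. \<mu> (Suc j) ` mu_reach M \<sigma> \<mu> (Suc j) k)"
      using hit False unfolding mu_rel_Suc by auto
    moreover have "submodule (mu_reach M \<sigma> \<mu> (Suc j) k) R (M (Suc j))"
      and "fm_closed (M (Suc j)) (Mf (Suc j)) (mu_reach M \<sigma> \<mu> (Suc j) k)" for k
      using mu_reach_closed_submodule[OF c] by blast+
    ultimately obtain y where reach: "\<forall>k. y \<in> mu_reach M \<sigma> \<mu> (Suc j) k" and "\<mu> (Suc j) y = x"
      using linearly_compact_INT_image[where B="mu_reach M \<sigma> \<mu> (Suc j)",
          OF filtered_moduleD(1)[OF cch_ray_repD(1)[OF c]] cch_ray_repD(2)[OF c]
          cch_ray_repD(1,3)[OF c] f cont _ _ mu_reach_Suc_subset]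
      by blast
    moreover have "y \<in> carrier (M (Suc j))" using reach[rule_format, of 0] by simp
    ultimately show ?thesis using False xc unfolding mu_rel_Suc by auto
  qed
qed

lemma INT_mu_le_eq_infinite_chains:
  assumes c: "cch_ray_rep R Rf M Mf \<sigma> \<mu>"
  shows "(\<Inter>i. mu_le M \<sigma> \<mu> i (carrier (M i))) =
    {m \<in> carrier (M 0). \<exists>f. (\<forall>i. f i \<in> carrier (M i)) \<and> f 0 = m \<and>
      (\<forall>i>0. (f i, f (i - 1)) \<in> mu_rel M \<sigma> \<mu> i)}"
proof (intro equalityI subsetI)
  fix m assume "m \<in> (\<Inter>i. mu_le M \<sigma> \<mu> i (carrier (M i)))"
  then have m: "m \<in> mu_reach M \<sigma> \<mu> 0 k" for k using mu_le_subset_mu_reach[of M \<sigma> \<mu> k] by blast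
  have "\<exists>f. \<forall>n. ((\<forall>k. f n \<in> mu_reach M \<sigma> \<mu> n k) \<and> (n = 0 \<longrightarrow> f n = m)) \<and>
      (f (Suc n), f n) \<in> mu_rel M \<sigma> \<mu> (Suc n)"
  proof (rule dependent_nat_choice[where P="\<lambda>n x. (\<forall>k. x \<in> mu_reach M \<sigma> \<mu> n k) \<and> (n = 0 \<longrightarrow> x = m)"
        and Q="\<lambda>n x y. (y, x) \<in> mu_rel M \<sigma> \<mu> (Suc n)"])
    show "\<exists>x. (\<forall>k. x \<in> mu_reach M \<sigma> \<mu> 0 k) \<and> (0 = 0 \<longrightarrow> x = m)" using m by blast
  next
    fix x n assume "(\<forall>k. x \<in> mu_reach M \<sigma> \<mu> n k) \<and> (n = 0 \<longrightarrow> x = m)"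
    then show "\<exists>y. ((\<forall>k. y \<in> mu_reach M \<sigma> \<mu> (Suc n) k) \<and> (Suc n = 0 \<longrightarrow> y = m)) \<and>
        (y, x) \<in> mu_rel M \<sigma> \<mu> (Suc n)"
      using mu_reach_lift[OF c] by blast
  qed
  then obtain f where reach: "\<And>n k. f n \<in> mu_reach M \<sigma> \<mu> n k" and "f 0 = m"
    and step: "\<And>n. (f (Suc n), f n) \<in> mu_rel M \<sigma> \<mu> (Suc n)"
    by blast
  moreover have "f i \<in> carrier (M i)" for i using reach[of i 0] by simp
  moreover have "(f i, f (i - 1)) \<in> mu_rel M \<sigma> \<mu> i" if "i > 0" for i
    using step[of "i - 1"] that by simp
  ultimately show "m \<in> {m \<in> carrier (M 0). \<exists>f. (\<forall>i. f i \<in> carrier (M i)) \<and> f 0 = m \<and>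
      (\<forall>i>0. (f i, f (i - 1)) \<in> mu_rel M \<sigma> \<mu> i)}"
    by blast
next
  fix m assume "m \<in> {m \<in> carrier (M 0). \<exists>f. (\<forall>i. f i \<in> carrier (M i)) \<and> f 0 = m \<and>
      (\<forall>i>0. (f i, f (i - 1)) \<in> mu_rel M \<sigma> \<mu> i)}"
  then obtain f where "\<forall>i. f i \<in> carrier (M i)" "f 0 = m" "\<forall>i>0. (f i, f (i - 1)) \<in> mu_rel M \<sigma> \<mu> i"
    by blast
  then have "m \<in> mu_le M \<sigma> \<mu> i (carrier (M i))" for i
    unfolding mu_le_def by (intro CollectI exI[of _ f]) auto
  then show "m \<in> (\<Inter>i. mu_le M \<sigma> \<mu> i (carrier (M i)))" by blast
qed

theorem lemma5p16:
  fixes R :: "'r ring" and Rf :: "nat \<Rightarrow> 'r set"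
    and M :: "nat \<Rightarrow> ('r, 'm) module" and Mf :: "nat \<Rightarrow> nat \<Rightarrow> 'm set"
    and \<sigma> :: "nat \<Rightarrow> bool" and \<mu> :: "nat \<Rightarrow> 'm \<Rightarrow> 'm"
  assumes "filtered_ring R Rf"
    and "cch_ray_rep R Rf M Mf \<sigma> \<mu>"
  shows "(\<forall>i m. m \<in> carrier (M (Suc i)) \<longrightarrow>
            fm_closed (M i) (Mf i) (mu_img M \<sigma> \<mu> (Suc i) m) \<and>
            (mu_img M \<sigma> \<mu> (Suc i) m \<noteq> {} \<longrightarrow> linear_variety R (M i) (mu_img M \<sigma> \<mu> (Suc i) m)))
       \<and> (\<forall>i N. submodule N R (M (Suc i)) \<and> fm_closed (M (Suc i)) (Mf (Suc i)) N \<longrightarrow>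
            submodule (mu_img_set M \<sigma> \<mu> (Suc i) N) R (M i) \<and>
            fm_closed (M i) (Mf i) (mu_img_set M \<sigma> \<mu> (Suc i) N))
       \<and> (\<Inter>i. mu_le M \<sigma> \<mu> i (carrier (M i))) =
           {m \<in> carrier (M 0). \<exists>f. (\<forall>i. f i \<in> carrier (M i)) \<and> f 0 = m \<and>
               (\<forall>i>0. (f i, f (i - 1)) \<in> mu_rel M \<sigma> \<mu> i)}"
  using mu_img_closed_linear_variety[OF assms(2)] mu_img_set_closed_submodule[OF assms(2)]
    INT_mu_le_eq_infinite_chains[OF assms(2)]
  by blast

end
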